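(* Let $k=k(N)=o(N)$ and consider the $S_k$ shuffle with boundary rates $\delta_j\in[0,1]$, $2\le j\le k-1$. There exist absolute constants $C>0$ and $c\in(0,1)$ such that for all $N$ sufficiently large and all $x\in[N]$, $P_x(\tilde\tau_{>4k}>C)\le c$.
   Context: The $S_k$ shuffle with boundary rates $(\delta_j)$: on $N$ cards, each block of $k$ consecutive positions is uniformly reshuffled at rate 1, and for each $2\le j\le k-1$ the first $j$ cards and the last $j$ cards are each uniformly reshuffled at rate $\delta_j$. Let $Z_{1,t}$ be the position at time $t$ of the card with label 1; $(Z_{1,t})_{t\ge0}$ is itself a Markov chain on $[N]$, and $P_x$ (with expectation $E_x$) denotes its law when $Z_{1,0}=x$. For $y\in[N]$, $\tilde\tau_{>y}=\inf\{t\ge0:Z_{1,t}>y\}$ and $\tilde\tau_{<y}=\inf\{t\ge0:Z_{1,t}<y\}$. *)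

theory Defs
  imports Complex_Main "HOL-Library.Landau_Symbols"
begin

text \<open>Jump rate of the position of a tagged card (label 1) in the S_k shuffle on N cards
  with boundary rates d j (2 <= j <= k-1), from position x to position y (x, y in {1..N}).
  Each k-block {i..i+k-1}, 1 <= i <= N-k+1, is uniformly reshuffled at rate 1; the first
  j and the last j cards are each uniformly reshuffled at rate d j.  A uniform reshuffle of
  a set S containing x sends the tagged card to each position of S with probability 1/|S|.\<close>
definition sk_rate :: "nat \<Rightarrow> nat \<Rightarrow> (nat \<Rightarrow> real) \<Rightarrow> nat \<Rightarrow> nat \<Rightarrow> real" where
  "sk_rate N k d x y =
     (if x = y then 0 else
        (\<Sum>i\<in>{1..N+1-k}. (if x \<in> {i..i+k-1} \<and> y \<in> {i..i+k-1} then 1 / real k else 0))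
      + (\<Sum>j\<in>{2..k-1}. d j * ((if x \<le> j \<and> y \<le> j then 1 / real j else 0)
                               + (if N+1-j \<le> x \<and> N+1-j \<le> y then 1 / real j else 0))))"

definition killed_gen :: "nat \<Rightarrow> nat \<Rightarrow> (nat \<Rightarrow> real) \<Rightarrow> nat \<Rightarrow> nat \<Rightarrow> nat \<Rightarrow> real" where
  "killed_gen N k d a x y =
     (if x \<in> {1..min a N} \<and> y \<in> {1..min a N} then
        (if x = y then - (\<Sum>z\<in>{1..N}-{x}. sk_rate N k d x z) else sk_rate N k d x y)
      else 0)"

fun killed_pow :: "nat \<Rightarrow> nat \<Rightarrow> (nat \<Rightarrow> real) \<Rightarrow> nat \<Rightarrow> nat \<Rightarrow> nat \<Rightarrow> nat \<Rightarrow> real" where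
  "killed_pow N k d a 0 x y = (if x = y then 1 else 0)"
| "killed_pow N k d a (Suc n) x y =
     (\<Sum>z\<in>{1..min a N}. killed_gen N k d a x z * killed_pow N k d a n z y)"

text \<open>P_x(tau_{>a} > t) for the continuous-time position chain Z_{1,t}:
  sum over y in A of (exp(t Q_A))(x,y), with Q_A the killed generator.\<close>
definition survival :: "nat \<Rightarrow> nat \<Rightarrow> (nat \<Rightarrow> real) \<Rightarrow> nat \<Rightarrow> real \<Rightarrow> nat \<Rightarrow> real" where
  "survival N k d a t x =
     (\<Sum>n. t ^ n / fact n * (\<Sum>y\<in>{1..min a N}. killed_pow N k d a n x y))"

end

theory Submission
  imports Defs
begin

text \<open>
  Let Q be the generator of the tagged card's position killed on leaving A = {1..4k}; the
  survival probability is (exp (t Q) 1)(x).  A function f \<ge> 0 on A with Q f \<le> -1 on A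
  forces P_x(tau > t) \<le> f x / t: the expected time spent in A is at most f x, and survival
  is nonincreasing in time.  For f z = 12 (25 - (z/k)^2) the block reshuffles increase the mean
  of z^2 at rate at least of order k^2, and an explicit computation gives Q f \<le> -1 on A
  whenever N \<ge> 6k, boundary reshuffles included.  Since f \<le> 300, t = 600 gives the bound 1/2.

  The semigroup is handled by uniformization: for a rate l dominating all exit rates,
  P = I + Q / l is a nonnegative sub-stochastic kernel and exp (t Q) = exp (-l t) exp (l t P),
  so positivity and monotonicity are only ever needed for powers of P.
\<close>

section \<open>Binomial transforms of exponential series\<close>

lemma exp_series_real: "(\<lambda>n. x^n / fact n) sums exp (x::real)"
  using exp_converges[of x] by (simp add: divide_inverse mult.commute)

lemma binomial_forward_difference:
  fixes b :: "nat \<Rightarrow> real"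
  shows "(\<Sum>m\<le>n. real (n choose m) * (-1)^(n-m) * (b (Suc m) - b m))
       = (\<Sum>m\<le>Suc n. real (Suc n choose m) * (-1)^(Suc n - m) * b m)"
    (is "?L = ?R")
proof -
  have sign: "(-1::real)^(Suc n - m) = - ((-1)^(n-m))" if "m \<le> n" for m
    using that by (simp add: Suc_diff_le)
  have "?R = (-1)^Suc n * b 0 + (\<Sum>m\<le>n. real (Suc n choose Suc m) * (-1)^(n-m) * b (Suc m))"
    by (subst sum.atMost_Suc_shift) simp
  also have "\<dots> = (-1)^Suc n * b 0 + (\<Sum>m\<le>n. real (n choose m) * (-1)^(n-m) * b (Suc m))
              + (\<Sum>m\<le>n. real (n choose Suc m) * (-1)^(n-m) * b (Suc m))"
    by (simp add: sum.distrib algebra_simps)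
  also have "(\<Sum>m\<le>n. real (n choose Suc m) * (-1)^(n-m) * b (Suc m))
      = (\<Sum>m\<le>Suc n. real (n choose m) * (-1)^(Suc n - m) * b m) - (-1)^Suc n * b 0"
    by (subst sum.atMost_Suc_shift) simp
  also have "(\<Sum>m\<le>Suc n. real (n choose m) * (-1)^(Suc n - m) * b m)
      = - (\<Sum>m\<le>n. real (n choose m) * (-1)^(n-m) * b m)"
    by (simp add: sign sum_negf[symmetric])
  finally show ?thesis
    by (simp add: sum_subtractf right_diff_distrib)
qed

lemma exp_series_binomial_transform:
  fixes a B :: real and b :: "nat \<Rightarrow> real"
  assumes bounded: "\<And>m. \<bar>b m\<bar> \<le> B"
  shows "(\<Sum>n. a^n / fact n * (\<Sum>m\<le>n. real (n choose m) * (-1)^(n-m) * b m))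
       = exp (-a) * (\<Sum>m. a^m / fact m * b m)"
proof -
  define u where "u m = a^m / fact m * b m" for m
  define e where "e j = (-a)^j / fact j" for j
  have abs_exp: "summable (\<lambda>m. \<bar>a\<bar>^m / fact m)"
    using exp_series_real sums_summable by blast
  have "summable (\<lambda>m. norm (u m))"
  proof (rule summable_comparison_test[OF _ summable_mult[OF abs_exp, of B]], intro exI allI impI)
    fix m
    have "norm (norm (u m)) = \<bar>a\<bar>^m / fact m * \<bar>b m\<bar>"
      by (simp add: u_def abs_mult power_abs)
    also have "\<dots> \<le> \<bar>a\<bar>^m / fact m * B"
      using bounded by (intro mult_left_mono) auto
    finally show "norm (norm (u m)) \<le> B * (\<bar>a\<bar>^m / fact m)"
      by (simp add: mult.commute)
  qed
  moreover have "summable (\<lambda>j. norm (e j))"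
    using abs_exp by (simp add: e_def power_abs)
  ultimately have prod: "suminf u * suminf e = (\<Sum>n. \<Sum>m\<le>n. u m * e (n - m))"
    by (rule Cauchy_product)
  have sum_e: "suminf e = exp (-a)"
    unfolding e_def by (rule sums_unique[OF exp_series_real, symmetric])
  have "u m * e (n - m) = a^n / fact n * (real (n choose m) * (-1)^(n-m) * b m)"
    if mn: "m \<le> n" for m n
  proof -
    obtain r where r: "n = m + r" using le_Suc_ex[OF mn] by blast
    show ?thesis
      unfolding u_def e_def r binomial_fact[OF le_add1]
      by (simp add: power_add power_minus[of a] field_simps)
  qed
  then have terms: "(\<lambda>n. \<Sum>m\<le>n. u m * e (n - m))
      = (\<lambda>n. a^n / fact n * (\<Sum>m\<le>n. real (n choose m) * (-1)^(n-m) * b m))"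
    by (auto simp: sum_distrib_left intro!: ext sum.cong)
  have "(\<Sum>n. a^n / fact n * (\<Sum>m\<le>n. real (n choose m) * (-1)^(n-m) * b m))
      = suminf u * suminf e"
    by (simp only: prod terms)
  also have "\<dots> = exp (-a) * (\<Sum>m. a^m / fact m * b m)"
    unfolding sum_e u_def by (rule mult.commute)
  finally show ?thesis .
qed

lemma exp_series_le_of_decay:
  fixes a C :: real and b :: "nat \<Rightarrow> real"
  assumes "0 < a" and nonneg: "\<And>m. 0 \<le> b m" and decay: "\<And>m. real (Suc m) * b m \<le> C"
  shows "(\<Sum>m. a^m / fact m * b m) \<le> C / a * exp a"
proof -
  have "0 \<le> C" using decay[of 0] nonneg[of 0] by simp
  have exp_tail: "(\<lambda>m. a^Suc m / fact (Suc m)) sums (exp a - 1)"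
    using sums_Suc_iff[of "\<lambda>m. a^m / fact m"] exp_series_real[of a] by simp
  have term_le: "a^m / fact m * b m \<le> C / a * (a^Suc m / fact (Suc m))" for m
  proof -
    have "a^m / fact m * b m = a^Suc m / fact (Suc m) / a * (real (Suc m) * b m)"
      using \<open>0 < a\<close> by (simp add: fact_Suc field_simps del: of_nat_Suc)
    also have "\<dots> \<le> a^Suc m / fact (Suc m) / a * C"
      using \<open>0 < a\<close> decay by (intro mult_left_mono) auto
    also have "\<dots> = C / a * (a^Suc m / fact (Suc m))"
      by simp
    finally show ?thesis .
  qed
  have summable: "summable (\<lambda>m. a^m / fact m * b m)"
  proof (rule summable_comparison_test[OF _ summable_mult[OF sums_summable[OF exp_tail], of "C / a"]],
         intro exI allI impI)
    fix m
    show "norm (a^m / fact m * b m) \<le> C / a * (a^Suc m / fact (Suc m))"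
      using term_le[of m] nonneg[of m] \<open>0 < a\<close> by simp
  qed
  have "(\<Sum>m. a^m / fact m * b m) \<le> C / a * (exp a - 1)"
    by (rule sums_le[OF term_le summable_sums[OF summable] sums_mult[OF exp_tail]])
  also have "\<dots> \<le> C / a * exp a"
    using \<open>0 \<le> C\<close> \<open>0 < a\<close> by (intro mult_left_mono) auto
  finally show ?thesis .
qed

section \<open>Lyapunov bounds for killed Markov semigroups\<close>

definition gen_apply :: "'a set \<Rightarrow> ('a \<Rightarrow> 'a \<Rightarrow> real) \<Rightarrow> ('a \<Rightarrow> real) \<Rightarrow> 'a \<Rightarrow> real" where
  "gen_apply A Q g x = (\<Sum>z\<in>A. Q x z * g z)"

definition unif_step :: "'a set \<Rightarrow> ('a \<Rightarrow> 'a \<Rightarrow> real) \<Rightarrow> real \<Rightarrow> ('a \<Rightarrow> real) \<Rightarrow> 'a \<Rightarrow> real" where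
  "unif_step A Q l g x = g x + gen_apply A Q g x / l"

lemma unif_step_diff:
  "unif_step A Q l (\<lambda>y. g y - c * h y) x = unif_step A Q l g x - c * unif_step A Q l h x"
  unfolding unif_step_def gen_apply_def
  by (simp add: algebra_simps sum_subtractf sum_distrib_left diff_divide_distrib)

lemma unif_iter_diff:
  "(unif_step A Q l ^^ m) (\<lambda>y. g y - c * h y)
     = (\<lambda>y. (unif_step A Q l ^^ m) g y - c * (unif_step A Q l ^^ m) h y)"
  by (induction m) (simp_all add: unif_step_diff)

locale subgenerator =
  fixes A :: "'a set" and Q :: "'a \<Rightarrow> 'a \<Rightarrow> real" and l :: real
  assumes finite_states: "finite A"
    and unif_rate_pos: "0 < l"
    and diag_ge: "x \<in> A \<Longrightarrow> - l \<le> Q x x"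
    and off_diag_nonneg: "x \<in> A \<Longrightarrow> z \<in> A \<Longrightarrow> z \<noteq> x \<Longrightarrow> 0 \<le> Q x z"
    and row_sum_nonpos: "x \<in> A \<Longrightarrow> (\<Sum>z\<in>A. Q x z) \<le> 0"
begin

abbreviation P :: "('a \<Rightarrow> real) \<Rightarrow> 'a \<Rightarrow> real" where
  "P \<equiv> unif_step A Q l"

lemma gen_apply_iter_binomial:
  "(gen_apply A Q ^^ n) g x = l^n * (\<Sum>m\<le>n. real (n choose m) * (-1)^(n-m) * (P ^^ m) g x)"
proof (induction n arbitrary: x)
  case 0
  then show ?case by simp
next
  case (Suc n)
  have gen_eq: "gen_apply A Q h y = l * (P h y - h y)" for h y
    using unif_rate_pos by (simp add: unif_step_def)
  have "(gen_apply A Q ^^ Suc n) g x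
      = l^n * (\<Sum>m\<le>n. real (n choose m) * (-1)^(n-m) * gen_apply A Q ((P ^^ m) g) x)"
    by (simp add: Suc gen_apply_def sum_distrib_left sum.swap[where A = A] algebra_simps)
  also have "\<dots> = l^Suc n * (\<Sum>m\<le>n. real (n choose m) * (-1)^(n-m) * ((P ^^ Suc m) g x - (P ^^ m) g x))"
    by (simp add: gen_eq sum_distrib_left algebra_simps)
  also have "\<dots> = l^Suc n * (\<Sum>m\<le>Suc n. real (Suc n choose m) * (-1)^(Suc n - m) * (P ^^ m) g x)"
    using binomial_forward_difference[where b = "\<lambda>m. (P ^^ m) g x"] by simp
  finally show ?case .
qed

lemma unif_step_nonneg:
  assumes "\<forall>z\<in>A. 0 \<le> g z" and "x \<in> A"
  shows "0 \<le> P g x"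
proof -
  have "l * P g x = l * g x + gen_apply A Q g x"
    using unif_rate_pos by (simp add: unif_step_def field_simps)
  also have "\<dots> = (l + Q x x) * g x + (\<Sum>z\<in>A-{x}. Q x z * g z)"
    using assms(2) finite_states by (simp add: gen_apply_def sum.remove algebra_simps)
  also have "0 \<le> \<dots>"
    using assms diag_ge[of x] off_diag_nonneg[of x]
    by (intro add_nonneg_nonneg[OF mult_nonneg_nonneg sum_nonneg]) auto
  finally show ?thesis
    using unif_rate_pos by (simp add: zero_le_mult_iff)
qed

lemma unif_iter_nonneg:
  assumes "\<forall>z\<in>A. 0 \<le> g z" and "x \<in> A"
  shows "0 \<le> (P ^^ m) g x"
  using assms(2) by (induction m arbitrary: x) (use assms(1) unif_step_nonneg in auto)

lemma unif_iter_mono: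
  assumes "\<forall>z\<in>A. g z \<le> h z" and "x \<in> A"
  shows "(P ^^ m) g x \<le> (P ^^ m) h x"
proof -
  have "(P ^^ m) (\<lambda>y. h y - 1 * g y) x = (P ^^ m) h x - 1 * (P ^^ m) g x"
    by (simp only: unif_iter_diff)
  moreover have "0 \<le> (P ^^ m) (\<lambda>y. h y - 1 * g y) x"
    using assms by (intro unif_iter_nonneg) auto
  ultimately show ?thesis by simp
qed

lemma unif_iter_one_bounds:
  assumes "x \<in> A"
  shows "0 \<le> (P ^^ m) (\<lambda>_. 1) x" and "(P ^^ Suc m) (\<lambda>_. 1) x \<le> (P ^^ m) (\<lambda>_. 1) x"
proof -
  show "0 \<le> (P ^^ m) (\<lambda>_. 1) x"
    using assms by (intro unif_iter_nonneg) auto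
  have "P (\<lambda>_. 1) y \<le> 1" if "y \<in> A" for y
    using row_sum_nonpos[OF that] unif_rate_pos
    by (simp add: unif_step_def gen_apply_def divide_nonpos_pos)
  then show "(P ^^ Suc m) (\<lambda>_. 1) x \<le> (P ^^ m) (\<lambda>_. 1) x"
    using unif_iter_mono[OF _ assms, of "P (\<lambda>_. 1)" "\<lambda>_. 1" m]
    by (simp del: funpow.simps add: funpow_Suc_right)
qed

lemma unif_iter_one_le:
  assumes "x \<in> A" and "j \<le> m"
  shows "(P ^^ m) (\<lambda>_. 1) x \<le> (P ^^ j) (\<lambda>_. 1) x"
  using lift_Suc_antimono_le[of "\<lambda>m. (P ^^ m) (\<lambda>_. 1) x"] unif_iter_one_bounds(2)[OF assms(1)] assms(2)
  by blast

lemma unif_iter_lyapunov: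
  assumes drift: "\<forall>z\<in>A. gen_apply A Q f z \<le> -1" and "x \<in> A"
  shows "(P ^^ m) f x \<le> f x - (\<Sum>j<m. (P ^^ j) (\<lambda>_. 1) x) / l"
proof (induction m)
  case 0
  then show ?case by simp
next
  case (Suc m)
  have "P f y \<le> f y - 1 / l * 1" if "y \<in> A" for y
  proof -
    have "gen_apply A Q f y / l \<le> -1 / l"
      using drift that unif_rate_pos by (intro divide_right_mono) auto
    then show ?thesis by (simp add: unif_step_def)
  qed
  then have "(P ^^ Suc m) f x \<le> (P ^^ m) (\<lambda>y. f y - 1 / l * 1) x"
    using unif_iter_mono[OF _ assms(2), of "P f" _ m] by (simp del: funpow.simps add: funpow_Suc_right)
  also have "\<dots> = (P ^^ m) f x - (P ^^ m) (\<lambda>_. 1) x / l"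
    by (simp only: unif_iter_diff) simp
  also have "\<dots> \<le> f x - (\<Sum>j<Suc m. (P ^^ j) (\<lambda>_. 1) x) / l"
    using Suc by (simp add: add_divide_distrib)
  finally show ?case .
qed

lemma unif_iter_one_decay:
  assumes f_nonneg: "\<forall>z\<in>A. 0 \<le> f z" and drift: "\<forall>z\<in>A. gen_apply A Q f z \<le> -1"
    and "x \<in> A"
  shows "real (Suc m) * (P ^^ m) (\<lambda>_. 1) x \<le> l * f x"
proof -
  have "real (Suc m) * (P ^^ m) (\<lambda>_. 1) x = (\<Sum>j<Suc m. (P ^^ m) (\<lambda>_. 1) x)"
    by simp
  also have "\<dots> \<le> (\<Sum>j<Suc m. (P ^^ j) (\<lambda>_. 1) x)"
    using unif_iter_one_le[OF assms(3)] by (intro sum_mono) auto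
  also have "\<dots> \<le> l * (f x - (P ^^ Suc m) f x)"
    using unif_iter_lyapunov[OF drift assms(3), of "Suc m"] unif_rate_pos by (simp add: field_simps)
  also have "\<dots> \<le> l * f x"
    using unif_iter_nonneg[OF f_nonneg assms(3), of "Suc m"] unif_rate_pos by simp
  finally show ?thesis .
qed

theorem exp_gen_survival_le:
  assumes f_nonneg: "\<forall>z\<in>A. 0 \<le> f z" and drift: "\<forall>z\<in>A. gen_apply A Q f z \<le> -1"
    and "x \<in> A" and "0 < t"
  shows "(\<Sum>n. t^n / fact n * (gen_apply A Q ^^ n) (\<lambda>_. 1) x) \<le> f x / t"
proof -
  define b where "b m = (P ^^ m) (\<lambda>_. 1) x" for m
  have lt: "0 < l * t" using unif_rate_pos \<open>0 < t\<close> by simp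
  have b_bounds: "0 \<le> b m" "b m \<le> 1" for m
    using unif_iter_one_bounds(1)[OF assms(3)] unif_iter_one_le[OF assms(3), of 0 m]
    by (simp_all add: b_def)
  have "(\<Sum>n. t^n / fact n * (gen_apply A Q ^^ n) (\<lambda>_. 1) x)
      = (\<Sum>n. (l * t)^n / fact n * (\<Sum>m\<le>n. real (n choose m) * (-1)^(n-m) * b m))"
    by (simp add: gen_apply_iter_binomial b_def power_mult_distrib algebra_simps)
  also have "\<dots> = exp (- (l * t)) * (\<Sum>m. (l * t)^m / fact m * b m)"
    by (rule exp_series_binomial_transform[where B = 1]) (use b_bounds in auto)
  also have "\<dots> \<le> exp (- (l * t)) * (l * f x / (l * t) * exp (l * t))"
    using unif_iter_one_decay[OF f_nonneg drift assms(3)] b_bounds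
    by (intro mult_left_mono exp_series_le_of_decay[OF lt]) (auto simp: b_def)
  also have "\<dots> = f x / t"
    using unif_rate_pos by (simp add: exp_minus field_simps)
  finally show ?thesis .
qed

end

section \<open>The tagged card of the S_k shuffle\<close>

lemma sk_rate_nonneg:
  assumes "\<forall>j\<in>{2..k-1}. 0 \<le> d j"
  shows "0 \<le> sk_rate N k d x y"
  unfolding sk_rate_def using assms
  by (auto intro!: add_nonneg_nonneg sum_nonneg mult_nonneg_nonneg)

lemma sum_indicator_mult:
  fixes c :: real and h :: "'a \<Rightarrow> real"
  assumes "finite B" and "S \<subseteq> B"
  shows "(\<Sum>z\<in>B. (if z \<in> S then c else 0) * h z) = c * sum h S"
proof -
  have "(\<Sum>z\<in>B. (if z \<in> S then c else 0) * h z) = (\<Sum>z\<in>B. if z \<in> S then c * h z else 0)"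
    by (intro sum.cong) auto
  also have "\<dots> = (\<Sum>z\<in>B \<inter> S. c * h z)"
    using assms(1) by (rule sum.inter_restrict[symmetric])
  finally show ?thesis
    using assms(2) by (simp add: Int_absorb1 sum_distrib_left)
qed

definition block_part :: "nat \<Rightarrow> nat \<Rightarrow> (nat \<Rightarrow> real) \<Rightarrow> nat \<Rightarrow> real" where
  "block_part N k h x =
     (\<Sum>i\<in>{1..N+1-k}. if x \<in> {i..i+k-1} then (\<Sum>z\<in>{i..i+k-1}. h z) / k else 0)"

definition left_boundary_part :: "nat \<Rightarrow> (nat \<Rightarrow> real) \<Rightarrow> (nat \<Rightarrow> real) \<Rightarrow> nat \<Rightarrow> real" where
  "left_boundary_part k d h x =
     (\<Sum>j\<in>{2..k-1}. if x \<le> j then d j * (\<Sum>z\<in>{1..j}. h z) / j else 0)"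

text \<open>For x + k \<le> N the right-boundary reshuffles (of at most k - 1 cards) never move x.\<close>
lemma sum_sk_rate_left:
  assumes "0 < k" and "x + k \<le> N" and "h x = 0"
  shows "(\<Sum>z\<in>{1..N}. sk_rate N k d x z * h z) = block_part N k h x + left_boundary_part k d h x"
proof -
  define I where "I i = (if x \<in> {i..i+k-1} then 1 / real k else 0)" for i
  define J where "J j = (if x \<le> j then d j / real j else 0)" for j
  have pointwise: "sk_rate N k d x z * h z
      = (\<Sum>i\<in>{1..N+1-k}. (if z \<in> {i..i+k-1} then I i else 0) * h z)
        + (\<Sum>j\<in>{2..k-1}. (if z \<in> {1..j} then J j else 0) * h z)" if "z \<in> {1..N}" for z
  proof (cases "z = x")
    case False
    have "(\<Sum>i\<in>{1..N+1-k}. if x \<in> {i..i+k-1} \<and> z \<in> {i..i+k-1} then 1 / real k else 0)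
        = (\<Sum>i\<in>{1..N+1-k}. if z \<in> {i..i+k-1} then I i else 0)"
      by (intro sum.cong) (auto simp: I_def)
    moreover have "(\<Sum>j\<in>{2..k-1}. d j * ((if x \<le> j \<and> z \<le> j then 1 / real j else 0)
                               + (if N+1-j \<le> x \<and> N+1-j \<le> z then 1 / real j else 0)))
        = (\<Sum>j\<in>{2..k-1}. if z \<in> {1..j} then J j else 0)"
      using that assms(2) by (intro sum.cong) (auto simp: J_def)
    ultimately have "sk_rate N k d x z
        = (\<Sum>i\<in>{1..N+1-k}. if z \<in> {i..i+k-1} then I i else 0)
          + (\<Sum>j\<in>{2..k-1}. if z \<in> {1..j} then J j else 0)"
      using False by (simp add: sk_rate_def)
    then show ?thesis
      by (simp only: distrib_right sum_distrib_right)
  qed (use assms(3) in \<open>simp add: sk_rate_def\<close>)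
  have "(\<Sum>z\<in>{1..N}. sk_rate N k d x z * h z)
      = (\<Sum>z\<in>{1..N}. (\<Sum>i\<in>{1..N+1-k}. (if z \<in> {i..i+k-1} then I i else 0) * h z)
                      + (\<Sum>j\<in>{2..k-1}. (if z \<in> {1..j} then J j else 0) * h z))"
    by (rule sum.cong[OF refl pointwise])
  also have "\<dots> = (\<Sum>i\<in>{1..N+1-k}. \<Sum>z\<in>{1..N}. (if z \<in> {i..i+k-1} then I i else 0) * h z)
        + (\<Sum>j\<in>{2..k-1}. \<Sum>z\<in>{1..N}. (if z \<in> {1..j} then J j else 0) * h z)"
    by (simp only: sum.distrib sum.swap[of _ "{1..N}"])
  also have "\<dots> = (\<Sum>i\<in>{1..N+1-k}. I i * (\<Sum>z\<in>{i..i+k-1}. h z))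
                    + (\<Sum>j\<in>{2..k-1}. J j * (\<Sum>z\<in>{1..j}. h z))"
    using assms(1,2) by (intro arg_cong2[where f = "(+)"] sum.cong refl sum_indicator_mult) auto
  also have "\<dots> = block_part N k h x + left_boundary_part k d h x"
    unfolding I_def J_def block_part_def left_boundary_part_def
    by (intro arg_cong2[where f = "(+)"] sum.cong) auto
  finally show ?thesis .
qed

lemma killed_gen_diag:
  "x \<in> {1..min a N} \<Longrightarrow> killed_gen N k d a x x = - (\<Sum>z\<in>{1..N}-{x}. sk_rate N k d x z)"
  by (simp add: killed_gen_def)

lemma subgenerator_killed_gen:
  assumes "\<forall>j\<in>{2..k-1}. 0 \<le> d j"
  shows "subgenerator {1..min a N} (killed_gen N k d a)
           (1 + (\<Sum>x\<in>{1..min a N}. \<Sum>z\<in>{1..N}-{x}. sk_rate N k d x z))"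
proof
  let ?A = "{1..min a N}"
  have exit_nonneg: "0 \<le> (\<Sum>z\<in>{1..N}-{x}. sk_rate N k d x z)" for x
    using sk_rate_nonneg[OF assms] by (simp add: sum_nonneg)
  show "0 < 1 + (\<Sum>x\<in>?A. \<Sum>z\<in>{1..N}-{x}. sk_rate N k d x z)"
    using exit_nonneg by (simp add: add_pos_nonneg sum_nonneg)
  fix x assume x: "x \<in> ?A"
  show "- (1 + (\<Sum>x\<in>?A. \<Sum>z\<in>{1..N}-{x}. sk_rate N k d x z)) \<le> killed_gen N k d a x x"
  proof -
    have "(\<Sum>z\<in>{1..N}-{x}. sk_rate N k d x z) \<le> (\<Sum>y\<in>?A. \<Sum>z\<in>{1..N}-{y}. sk_rate N k d y z)"
      by (rule member_le_sum) (use x exit_nonneg in auto)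
    then show ?thesis by (simp add: killed_gen_diag[OF x])
  qed
  show "0 \<le> killed_gen N k d a x z" if "z \<in> ?A" "z \<noteq> x" for z
    using x that sk_rate_nonneg[OF assms] by (simp add: killed_gen_def)
  have "(\<Sum>z\<in>?A. killed_gen N k d a x z) = killed_gen N k d a x x + (\<Sum>z\<in>?A-{x}. sk_rate N k d x z)"
    using x by (simp add: sum.remove killed_gen_def)
  also have "(\<Sum>z\<in>?A-{x}. sk_rate N k d x z) \<le> (\<Sum>z\<in>{1..N}-{x}. sk_rate N k d x z)"
    using sk_rate_nonneg[OF assms] by (intro sum_mono2) auto
  finally show "(\<Sum>z\<in>?A. killed_gen N k d a x z) \<le> 0"
    by (simp add: killed_gen_diag[OF x])
qed simp

lemma gen_apply_killed_gen:
  assumes x: "x \<in> {1..min a N}"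
  shows "gen_apply {1..min a N} (killed_gen N k d a) g x
       = (\<Sum>z\<in>{1..N}. sk_rate N k d x z * ((if z \<in> {1..min a N} then g z else 0) - g x))"
proof -
  let ?A = "{1..min a N}"
  define G where "G z = (if z \<in> ?A then g z else 0)" for z
  have "gen_apply ?A (killed_gen N k d a) g x
      = killed_gen N k d a x x * g x + (\<Sum>z\<in>?A-{x}. sk_rate N k d x z * g z)"
    using x by (simp add: gen_apply_def sum.remove killed_gen_def)
  also have "(\<Sum>z\<in>?A-{x}. sk_rate N k d x z * g z) = (\<Sum>z\<in>{1..N}-{x}. sk_rate N k d x z * G z)"
    by (rule sum.mono_neutral_cong_left) (auto simp: G_def)
  also have "killed_gen N k d a x x * g x + \<dots> = (\<Sum>z\<in>{1..N}-{x}. sk_rate N k d x z * (G z - g x))"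
    by (simp add: killed_gen_diag[OF x] sum_distrib_right right_diff_distrib sum_subtractf)
  also have "\<dots> = (\<Sum>z\<in>{1..N}. sk_rate N k d x z * (G z - g x))"
    using x by (intro sum.mono_neutral_left) (auto simp: sk_rate_def)
  finally show ?thesis by (simp add: G_def)
qed

lemma sum_killed_pow:
  assumes "x \<in> {1..min a N}"
  shows "(\<Sum>y\<in>{1..min a N}. killed_pow N k d a n x y)
       = (gen_apply {1..min a N} (killed_gen N k d a) ^^ n) (\<lambda>_. 1) x"
  using assms
proof (induction n arbitrary: x)
  case (Suc n)
  let ?A = "{1..min a N}"
  have "(\<Sum>y\<in>?A. killed_pow N k d a (Suc n) x y)
      = (\<Sum>z\<in>?A. killed_gen N k d a x z * (\<Sum>y\<in>?A. killed_pow N k d a n z y))"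
    by (simp add: sum_distrib_left) (rule sum.swap)
  also have "\<dots> = (\<Sum>z\<in>?A. killed_gen N k d a x z * (gen_apply ?A (killed_gen N k d a) ^^ n) (\<lambda>_. 1) z)"
    using Suc.IH by (intro sum.cong) auto
  finally show ?case by (simp add: gen_apply_def[of _ _ _ x])
qed simp

lemma survival_outside:
  assumes "x \<notin> {1..min a N}"
  shows "survival N k d a t x = 0"
proof -
  have "killed_pow N k d a n x y = 0" if "y \<in> {1..min a N}" for n y
    using assms that by (cases n) (auto simp: killed_gen_def)
  then show ?thesis by (simp add: survival_def)
qed

lemma survival_le_of_lyapunov:
  assumes "\<forall>j\<in>{2..k-1}. 0 \<le> d j"
    and "\<forall>z\<in>{1..min a N}. 0 \<le> f z"
    and "\<forall>z\<in>{1..min a N}. gen_apply {1..min a N} (killed_gen N k d a) f z \<le> -1"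
    and "x \<in> {1..min a N}" and "0 < t"
  shows "survival N k d a t x \<le> f x / t"
proof -
  interpret subgenerator "{1..min a N}" "killed_gen N k d a"
      "1 + (\<Sum>x\<in>{1..min a N}. \<Sum>z\<in>{1..N}-{x}. sk_rate N k d x z)"
    using subgenerator_killed_gen[OF assms(1)] .
  show ?thesis
    using exp_gen_survival_le[OF assms(2-5)] sum_killed_pow[OF assms(4)]
    by (simp add: survival_def)
qed

section \<open>A quadratic Lyapunov function\<close>

lemma sum_squares_interval:
  "(\<Sum>z\<in>{i..<i+L}. (real z)^2)
     = real L * (real i)^2 + real L * (real L - 1) * real i + real L * (real L - 1) * (2 * real L - 1) / 6"
proof (induction L)
  case (Suc L)
  have "{i..<i + Suc L} = insert (i + L) {i..<i+L}" by auto
  then show ?case using Suc by (simp add: field_simps power2_eq_square)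
qed simp

lemma sum_interval:
  "(\<Sum>z\<in>{i..<i+L}. real z) = real L * real i + real L * (real L - 1) / 2"
proof (induction L)
  case (Suc L)
  have "{i..<i + Suc L} = insert (i + L) {i..<i+L}" by auto
  then show ?case using Suc by (simp add: field_simps)
qed simp

text \<open>
  lyap k is nonnegative up to 5k, the farthest a single move takes the card from {1..4k};
  the factor 12 makes its drift at most -1.
\<close>
definition lyap :: "nat \<Rightarrow> nat \<Rightarrow> real" where
  "lyap k z = 12 * (25 - (real z)^2 / (real k)^2)"

lemma lyap_nonneg:
  assumes "0 < k" and "z \<le> 5 * k"
  shows "0 \<le> lyap k z"
proof -
  have "(real z)^2 \<le> (5 * real k)^2"
    using assms(2) by (intro power_mono) auto
  then show ?thesis
    using assms(1) by (simp add: lyap_def field_simps power_mult_distrib)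
qed

lemma lyap_le: "lyap k z \<le> 300"
  by (simp add: lyap_def)

lemma lyap_increment_sum:
  assumes "0 < k"
  shows "(\<Sum>z\<in>{i..<i+L}. lyap k z - lyap k x)
           = 12 / (real k)^2 * (real L * (real x)^2 - (\<Sum>z\<in>{i..<i+L}. (real z)^2))"
proof -
  have "lyap k z - lyap k x = 12 / (real k)^2 * ((real x)^2 - (real z)^2)" for z
    using assms by (simp add: lyap_def field_simps)
  then have "(\<Sum>z\<in>{i..<i+L}. lyap k z - lyap k x) = 12 / (real k)^2 * (\<Sum>z\<in>{i..<i+L}. (real x)^2 - (real z)^2)"
    by (simp only: sum_distrib_left)
  then show ?thesis
    by (simp only: sum_subtractf) simp
qed

lemma block_lyap_increment:
  assumes "0 < k"
  shows "(\<Sum>z\<in>{i..i+k-1}. lyap k z - lyap k x) / k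
           = 12 / (real k)^2 * ((real x)^2 - (real i)^2 - (real k - 1) * real i
                                - (real k - 1) * (2 * real k - 1) / 6)"
proof -
  have block: "{i..i+k-1} = {i..<i+k}" using assms by auto
  show ?thesis
    unfolding block lyap_increment_sum[OF assms] sum_squares_interval
    using assms by (simp add: field_simps power2_eq_square)
qed

lemma initial_lyap_increment:
  assumes "0 < k" and "0 < j"
  shows "(\<Sum>z\<in>{1..j}. lyap k z - lyap k x) / j
           = 12 / (real k)^2 * ((real x)^2 - (real j + 1) * (2 * real j + 1) / 6)"
proof -
  have initial: "{1..j} = {1..<1+j}" by auto
  show ?thesis
    unfolding initial lyap_increment_sum[OF assms(1)] sum_squares_interval
    using assms by (simp add: field_simps power2_eq_square)
qed

lemma blocks_lyap_increment:
  assumes "0 < k"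
  shows "(\<Sum>i\<in>I. (\<Sum>z\<in>{i..i+k-1}. lyap k z - lyap k x) / k)
           = 12 / (real k)^2 * (real (card I) * ((real x)^2 - (real k - 1) * (2 * real k - 1) / 6)
                                - (\<Sum>i\<in>I. (real i)^2) - (real k - 1) * (\<Sum>i\<in>I. real i))"
proof -
  have "(\<Sum>i\<in>I. (real x)^2 - (real i)^2 - (real k - 1) * real i - (real k - 1) * (2 * real k - 1) / 6)
      = real (card I) * ((real x)^2 - (real k - 1) * (2 * real k - 1) / 6)
        - (\<Sum>i\<in>I. (real i)^2) - (real k - 1) * (\<Sum>i\<in>I. real i)"
    by (simp add: sum_subtractf right_diff_distrib flip: sum_distrib_left)
  then show ?thesis
    unfolding block_lyap_increment[OF assms] sum_distrib_left[symmetric] by simp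
qed

lemma lyap_blocks_far:
  assumes "2 \<le> k" and "k \<le> x"
  shows "(\<Sum>i\<in>{x+1-k..<x+1}. (\<Sum>z\<in>{i..i+k-1}. lyap k z - lyap k x) / k) \<le> -1"
proof -
  define c where "c = x + 1 - k"
  have range: "{x+1-k..<x+1} = {c..<c+k}" and c: "real c = real x + 1 - real k"
    using assms by (auto simp: c_def)
  have "(\<Sum>i\<in>{x+1-k..<x+1}. (\<Sum>z\<in>{i..i+k-1}. lyap k z - lyap k x) / k) = - 2 * ((real k)^2 - 1) / real k"
    unfolding range blocks_lyap_increment[OF order.strict_trans2[OF pos2 assms(1)]] sum_squares_interval sum_interval c
    using assms by (simp add: field_simps power2_eq_square)
  also have "\<dots> \<le> -1"
  proof -
    have k2: "2 \<le> real k" using assms(1) by simp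
    have "2 * real k \<le> real k * real k"
      using mult_right_mono[OF k2, of "real k"] by simp
    then have "real k \<le> 2 * (real k * real k) - 2"
      using k2 by linarith
    then show ?thesis
      using k2 by (simp add: field_simps power2_eq_square)
  qed
  finally show ?thesis .
qed

lemma lyap_blocks_near:
  assumes "1 \<le> x" and "x < k"
  shows "(\<Sum>i\<in>{1..<1+x}. (\<Sum>z\<in>{i..i+k-1}. lyap k z - lyap k x) / k)
           + (real k - real x) * (8 * (real x)^2 / (real k)^2) \<le> -1"
proof -
  have "(\<Sum>i\<in>{1..<1+x}. (\<Sum>z\<in>{i..i+k-1}. lyap k z - lyap k x) / k)
           + (real k - real x) * (8 * (real x)^2 / (real k)^2)
      = 2 * real x * (real k * real x - 2 * (real k)^2 + 1) / (real k)^2"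
    unfolding blocks_lyap_increment[OF order.strict_trans1[OF le0 assms(2)]] sum_squares_interval sum_interval
    using assms by (simp add: field_simps power2_eq_square)
  also have "\<dots> \<le> -1"
  proof -
    have x1: "1 \<le> real x" and xk: "real x + 1 \<le> real k" using assms by auto
    have "real k * real x \<le> real k * (real k - 1)"
      using xk by (intro mult_left_mono) auto
    moreover have "0 \<le> real k * real k" by simp
    ultimately have neg: "real k * real x - 2 * (real k)^2 + 1 \<le> - ((real k)^2 / 2)"
      unfolding power2_eq_square right_diff_distrib using x1 xk by linarith
    have "2 * real x * (real k * real x - 2 * (real k)^2 + 1) \<le> 2 * (real k * real x - 2 * (real k)^2 + 1)"
    proof (rule mult_right_mono_neg)
      show "real k * real x - 2 * (real k)^2 + 1 \<le> 0"
        using neg zero_le_power2[of "real k"] by linarith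
    qed (use x1 in simp)
    also have "\<dots> \<le> - ((real k)^2)"
      using neg by simp
    finally show ?thesis
      using xk by (simp add: field_simps)
  qed
  finally show ?thesis .
qed

lemma initial_lyap_increment_le:
  assumes "0 < k" and "x \<le> j" and "0 < j" and "0 \<le> \<delta>" and "\<delta> \<le> 1"
  shows "\<delta> * (\<Sum>z\<in>{1..j}. lyap k z - lyap k x) / j \<le> 8 * (real x)^2 / (real k)^2"
proof -
  define v where "v = (\<Sum>z\<in>{1..j}. lyap k z - lyap k x) / j"
  have "(real x)^2 \<le> (real j)^2"
    using assms(2) by (intro power_mono) auto
  then have "(real x)^2 / 3 \<le> (real j + 1) * (2 * real j + 1) / 6"
    by (simp add: field_simps power2_eq_square)
  then have "v \<le> 12 / (real k)^2 * ((real x)^2 - (real x)^2 / 3)"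
    unfolding v_def initial_lyap_increment[OF assms(1,3)] by (intro mult_left_mono) auto
  also have "\<dots> = 8 * (real x)^2 / (real k)^2"
    by simp
  finally have v: "v \<le> 8 * (real x)^2 / (real k)^2" .
  have "\<delta> * v \<le> max 0 v"
    using assms(4,5) by (cases "0 \<le> v") (auto intro: mult_left_le_one_le mult_nonneg_nonpos)
  also have "\<dots> \<le> 8 * (real x)^2 / (real k)^2"
    using v by simp
  finally show ?thesis
    by (simp add: v_def)
qed

lemma block_part_eq:
  assumes "1 \<le> x" and "x + k \<le> N + 1"
  shows "block_part N k h x = (\<Sum>i\<in>{max 1 (x+1-k)..<x+1}. (\<Sum>z\<in>{i..i+k-1}. h z) / k)"
proof -
  have "{i\<in>{1..N+1-k}. x \<in> {i..i+k-1}} = {max 1 (x+1-k)..<x+1}"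
    using assms by auto
  then show ?thesis
    unfolding block_part_def by (simp flip: sum.inter_filter)
qed

lemma left_boundary_part_lyap_le:
  assumes "0 < k" and "x < k" and "\<forall>j\<in>{2..k-1}. 0 \<le> d j \<and> d j \<le> 1"
  shows "left_boundary_part k d (\<lambda>z. lyap k z - lyap k x) x
           \<le> (real k - real x) * (8 * (real x)^2 / (real k)^2)"
proof -
  have "left_boundary_part k d (\<lambda>z. lyap k z - lyap k x) x
      \<le> (\<Sum>j\<in>{2..k-1}. if x \<le> j then 8 * (real x)^2 / (real k)^2 else 0)"
    unfolding left_boundary_part_def
  proof (intro sum_mono)
    fix j assume "j \<in> {2..k-1}"
    then show "(if x \<le> j then d j * (\<Sum>z\<in>{1..j}. lyap k z - lyap k x) / j else 0)
        \<le> (if x \<le> j then 8 * (real x)^2 / (real k)^2 else 0)"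
      using assms initial_lyap_increment_le[of k x j "d j"] by auto
  qed
  also have "\<dots> = real (card {j\<in>{2..k-1}. x \<le> j}) * (8 * (real x)^2 / (real k)^2)"
    by (simp flip: sum.inter_filter)
  also have "\<dots> \<le> (real k - real x) * (8 * (real x)^2 / (real k)^2)"
  proof (rule mult_right_mono)
    have "card {j\<in>{2..k-1}. x \<le> j} \<le> card {x..<k}"
      by (intro card_mono) auto
    then show "real (card {j\<in>{2..k-1}. x \<le> j}) \<le> real k - real x"
      using assms(2) by simp
  qed simp
  finally show ?thesis .
qed

lemma killed_gen_lyap_le:
  assumes k: "0 < k" and N: "6 * k \<le> N" and x: "x \<in> {1..4*k}"
    and d: "\<forall>j\<in>{2..k-1}. 0 \<le> d j"
  shows "gen_apply {1..4*k} (killed_gen N k d (4*k)) (lyap k) x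
           \<le> block_part N k (\<lambda>z. lyap k z - lyap k x) x
             + left_boundary_part k d (\<lambda>z. lyap k z - lyap k x) x"
proof -
  \<comment> \<open>Killing replaces lyap by 0 off A; this only lowers the drift, as lyap \<ge> 0
    wherever the card can land.\<close>
  define F where "F z = (if z \<in> {1..4*k} then lyap k z else 0) - lyap k x" for z
  have F_le: "F z \<le> lyap k z - lyap k x" if "z \<le> 5 * k" for z
    using lyap_nonneg[OF k that] by (auto simp: F_def)
  have A: "{1..min (4*k) N} = {1..4*k}" using N by simp
  have "gen_apply {1..4*k} (killed_gen N k d (4*k)) (lyap k) x = (\<Sum>z\<in>{1..N}. sk_rate N k d x z * F z)"
    using gen_apply_killed_gen[of x "4*k" N k d "lyap k"] x unfolding A F_def by simp
  also have "\<dots> = block_part N k F x + left_boundary_part k d F x"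
    using k N x by (intro sum_sk_rate_left) (auto simp: F_def)
  also have "\<dots> \<le> block_part N k (\<lambda>z. lyap k z - lyap k x) x
                   + left_boundary_part k d (\<lambda>z. lyap k z - lyap k x) x"
    unfolding block_part_def left_boundary_part_def
  proof (intro add_mono sum_mono)
    fix i assume "i \<in> {1..N+1-k}"
    show "(if x \<in> {i..i+k-1} then (\<Sum>z\<in>{i..i+k-1}. F z) / k else 0)
        \<le> (if x \<in> {i..i+k-1} then (\<Sum>z\<in>{i..i+k-1}. lyap k z - lyap k x) / k else 0)"
      using x F_le by (auto intro!: divide_right_mono sum_mono)
  next
    fix j assume "j \<in> {2..k-1}"
    then show "(if x \<le> j then d j * (\<Sum>z\<in>{1..j}. F z) / j else 0)
        \<le> (if x \<le> j then d j * (\<Sum>z\<in>{1..j}. lyap k z - lyap k x) / j else 0)"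
      using d F_le by (auto intro!: divide_right_mono mult_left_mono sum_mono)
  qed
  finally show ?thesis .
qed

lemma lyap_drift:
  assumes k: "2 \<le> k" and N: "6 * k \<le> N" and x: "x \<in> {1..4*k}"
    and d: "\<forall>j\<in>{2..k-1}. 0 \<le> d j \<and> d j \<le> 1"
  shows "gen_apply {1..4*k} (killed_gen N k d (4*k)) (lyap k) x \<le> -1"
proof -
  have k0: "0 < k" using k by simp
  have blocks: "block_part N k (\<lambda>z. lyap k z - lyap k x) x
      = (\<Sum>i\<in>{max 1 (x+1-k)..<x+1}. (\<Sum>z\<in>{i..i+k-1}. lyap k z - lyap k x) / k)"
    using N x by (intro block_part_eq) auto
  have drift: "gen_apply {1..4*k} (killed_gen N k d (4*k)) (lyap k) x
      \<le> block_part N k (\<lambda>z. lyap k z - lyap k x) x + left_boundary_part k d (\<lambda>z. lyap k z - lyap k x) x"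
    using d by (intro killed_gen_lyap_le[OF k0 N x]) auto
  show ?thesis
  proof (cases "k \<le> x")
    case True
    have range: "max 1 (x+1-k) = x+1-k"
      using True by simp
    have "left_boundary_part k d (\<lambda>z. lyap k z - lyap k x) x = 0"
      unfolding left_boundary_part_def using True by (intro sum.neutral) auto
    then show ?thesis
      using drift lyap_blocks_far[OF k True] unfolding blocks range by linarith
  next
    case False
    have range: "{max 1 (x+1-k)..<x+1} = {1..<1+x}"
      using False by auto
    show ?thesis
      using drift lyap_blocks_near[of x k] left_boundary_part_lyap_le[OF k0 _ d, of x] False x
      unfolding blocks range by auto
  qed
qed

lemma survival_4k_le_half:
  assumes k: "2 \<le> k" and N: "6 * k \<le> N" and d: "\<forall>j\<in>{2..k-1}. 0 \<le> d j \<and> d j \<le> 1"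
  shows "survival N k d (4 * k) 600 x \<le> 1 / 2"
proof (cases "x \<in> {1..4*k}")
  case True
  have A: "{1..min (4*k) N} = {1..4*k}" using N by simp
  have "survival N k d (4 * k) 600 x \<le> lyap k x / 600"
    using survival_le_of_lyapunov[of k d "4*k" N "lyap k" x 600] lyap_nonneg[of k] lyap_drift[OF k N _ d] d k True
    unfolding A by auto
  also have "\<dots> \<le> 1 / 2"
    using lyap_le[of k x] by simp
  finally show ?thesis .
next
  case False
  then show ?thesis
    using survival_outside[of x "4*k" N] N by simp
qed

theorem lemma5p2:
  shows "\<exists>C c :: real. C > 0 \<and> 0 < c \<and> c < 1 \<and>
    (\<forall>(k :: nat \<Rightarrow> nat) (\<delta> :: nat \<Rightarrow> nat \<Rightarrow> real).
       (\<lambda>N. real (k N)) \<in> o(\<lambda>N. real N) \<and> (\<forall>N. 2 \<le> k N) \<and>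
       (\<forall>N j. 2 \<le> j \<and> j \<le> k N - 1 \<longrightarrow> 0 \<le> \<delta> N j \<and> \<delta> N j \<le> 1) \<longrightarrow>
       (\<forall>\<^sub>F N in sequentially. \<forall>x\<in>{1..N}.
          survival N (k N) (\<delta> N) (4 * k N) C x \<le> c))"
proof -
  have "\<forall>\<^sub>F N in sequentially. \<forall>x\<in>{1..N}. survival N (k N) (\<delta> N) (4 * k N) 600 x \<le> 1 / 2"
    if small: "(\<lambda>N. real (k N)) \<in> o(\<lambda>N. real N)" and k: "\<forall>N. 2 \<le> k N"
      and \<delta>: "\<forall>N j. 2 \<le> j \<and> j \<le> k N - 1 \<longrightarrow> 0 \<le> \<delta> N j \<and> \<delta> N j \<le> 1"
    for k :: "nat \<Rightarrow> nat" and \<delta> :: "nat \<Rightarrow> nat \<Rightarrow> real"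
  proof -
    have "\<forall>\<^sub>F N in sequentially. real (k N) \<le> 1 / 6 * real N"
      using landau_o.smallD[OF small, of "1 / 6"] by simp
    then show ?thesis
      by (rule eventually_mono) (use k \<delta> survival_4k_le_half in auto)
  qed
  then show ?thesis
    by (intro exI[of _ 600] exI[of _ "1 / 2"]) auto
qed

end
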